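(* Let $S$ be a 2-tangle and write its bracket expansion as $\langle S\rangle = \alpha_S\langle[0]\rangle + \beta_S\langle[\infty]\rangle$. Let $[1]$ denote the one-crossing tangle with $\langle[1]\rangle = A\langle[0]\rangle + A^{-1}\langle[\infty]\rangle$ and $[-1]$ its mirror image, and let $L = N(S+[1])$ and $L' = N(S+[-1])$, oriented (compatibly outside the crossing) so that the crossing of $L$ coming from $[1]$ is a negative crossing (so $w(L') = w(L)+2$). If $L$ and $L'$ have the same Jones polynomial, then $\alpha_S = 0$; that is, $\langle S\rangle = \kappa\langle[\infty]\rangle$ where $\kappa$ is defined by $\langle L\rangle = -A^{-3}\kappa$.
   Context: The bracket polynomial $\langle\cdot\rangle$ is the regular isotopy invariant of unoriented diagrams defined by $\langle \chi\rangle = A\langle \asymp\rangle + A^{-1}\langle >\!<\rangle$ and loop value $d=-A^2-A^{-2}$; the Jones polynomial is determined by $f_K(A) = (-A^3)^{-w(K)}\langle K\rangle$, with $w$ the writhe. A 2-tangle has exterior edges NW, NE, SW, SE. $[0]$ is the crossingless tangle joining NW–NE and SW–SE; $[\infty]$ joins NW–SW and NE–SE. Every tangle satisfies $\langle T\rangle = \alpha_T\langle[0]\rangle+\beta_T\langle[\infty]\rangle$ for well-defined Laurent polynomials $\alpha_T,\beta_T$. The sum $T+S$ attaches NE of $T$ to NW of $S$ and SE of $T$ to SW of $S$. The numerator $N(T)$ is the link obtained by joining NW to NE and SW to SE. *)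

theory Defs
  imports Main "HOL-Computational_Algebra.Formal_Laurent_Series"
begin

text \<open>A crossing (a,b,c,d) lists its four endpoints in cyclic
order; the two strands through it are a--c and b--d.  The crossing is recorded by its
smoothings: the A-smoothing joins a--b and c--d, the B-smoothing joins a--d and b--c.
(Mirroring a crossing swaps A and B, i.e. rotates the tuple by one.)  Arcs join two points.\<close>

type_synonym xing = "nat \<times> nat \<times> nat \<times> nat"
type_synonym arc = "nat \<times> nat"

datatype diagram = Diagram (dxings: "xing list") (darcs: "arc list")

datatype tangle = Tangle (xings: "xing list") (tarcs: "arc list")
  (tNW: nat) (tNE: nat) (tSW: nat) (tSE: nat)

fun xpts :: "xing \<Rightarrow> nat list" where
  "xpts (a, b, c, d) = [a, b, c, d]"

definition cross_pts :: "xing list \<Rightarrow> nat list" where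
  "cross_pts cs = concat (map xpts cs)"

definition arc_pts :: "arc list \<Rightarrow> nat list" where
  "arc_pts as = concat (map (\<lambda>(p, q). [p, q]) as)"

fun smooth :: "bool \<Rightarrow> xing \<Rightarrow> arc list" where
  "smooth True (a, b, c, d) = [(a, b), (c, d)]"
| "smooth False (a, b, c, d) = [(a, d), (b, c)]"

text \<open>A state assigns to crossing i the A-smoothing (True) or the B-smoothing (False).\<close>
definition states :: "nat \<Rightarrow> bool list set" where
  "states n = {s. length s = n}"

definition state_edges :: "xing list \<Rightarrow> arc list \<Rightarrow> bool list \<Rightarrow> arc set" where
  "state_edges cs as s = set as \<union> set (concat (map (\<lambda>(b, c). smooth b c) (zip s cs)))"

definition conn :: "arc set \<Rightarrow> (nat \<times> nat) set" where
  "conn E = (E \<union> E\<inverse>)\<^sup>*"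

definition dpts :: "xing list \<Rightarrow> arc list \<Rightarrow> nat set" where
  "dpts cs as = set (cross_pts cs) \<union> set (arc_pts as)"

definition Avar :: "rat fls" where
  "Avar = fls_X"

definition dloop :: "rat fls" where
  "dloop = - (Avar ^ 2) - inverse (Avar ^ 2)"

definition state_weight :: "bool list \<Rightarrow> rat fls" where
  "state_weight s = Avar powi (int (count_list s True) - int (count_list s False))"

text \<open>Bracket of a link diagram, normalised so that the unknot diagram has bracket 1.\<close>
definition bracket :: "diagram \<Rightarrow> rat fls" where
  "bracket D = (\<Sum>s\<in>states (length (dxings D)).
      state_weight s *
      dloop powi (int (card (dpts (dxings D) (darcs D) // conn (state_edges (dxings D) (darcs D) s))) - 1))"

definition tpts :: "tangle \<Rightarrow> nat set" where
  "tpts T = dpts (xings T) (tarcs T) \<union> {tNW T, tNE T, tSW T, tSE T}"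

definition tloops :: "tangle \<Rightarrow> bool list \<Rightarrow> nat" where
  "tloops T s = card {C \<in> tpts T // conn (state_edges (xings T) (tarcs T) s).
      tNW T \<notin> C \<and> tNE T \<notin> C \<and> tSW T \<notin> C \<and> tSE T \<notin> C}"

definition tcoef :: "tangle \<Rightarrow> ((nat \<times> nat) set \<Rightarrow> bool) \<Rightarrow> rat fls" where
  "tcoef T P = (\<Sum>s\<in>{s \<in> states (length (xings T)). P (conn (state_edges (xings T) (tarcs T) s))}.
      state_weight s * dloop ^ tloops T s)"

text \<open>Coefficients of <T> = alpha <[0]> + beta <[infinity]> (+ gamma <[NW-SE,NE-SW]>, the
last being zero for classical tangles).\<close>
definition alpha :: "tangle \<Rightarrow> rat fls" where
  "alpha T = tcoef T (\<lambda>R. (tNW T, tNE T) \<in> R)"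

definition beta :: "tangle \<Rightarrow> rat fls" where
  "beta T = tcoef T (\<lambda>R. (tNW T, tSW T) \<in> R)"

definition gamma :: "tangle \<Rightarrow> rat fls" where
  "gamma T = tcoef T (\<lambda>R. (tNW T, tSE T) \<in> R)"

definition tangle_wf :: "tangle \<Rightarrow> bool" where
  "tangle_wf T \<longleftrightarrow>
     distinct (cross_pts (xings T)) \<and>
     distinct [tNW T, tNE T, tSW T, tSE T] \<and>
     {tNW T, tNE T, tSW T, tSE T} \<inter> set (cross_pts (xings T)) = {} \<and>
     (\<forall>p. (p \<in> set (cross_pts (xings T)) \<union> {tNW T, tNE T, tSW T, tSE T}
              \<longrightarrow> count_list (arc_pts (tarcs T)) p = 1) \<and>
          (p \<notin> set (cross_pts (xings T)) \<union> {tNW T, tNE T, tSW T, tSE T}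
              \<longrightarrow> count_list (arc_pts (tarcs T)) p \<in> {0, 2}))"

fun map_xing :: "(nat \<Rightarrow> nat) \<Rightarrow> xing \<Rightarrow> xing" where
  "map_xing f (a, b, c, d) = (f a, f b, f c, f d)"

definition ren :: "(nat \<Rightarrow> nat) \<Rightarrow> tangle \<Rightarrow> tangle" where
  "ren f T = Tangle (map (map_xing f) (xings T)) (map (map_prod f f) (tarcs T))
     (f (tNW T)) (f (tNE T)) (f (tSW T)) (f (tSE T))"

definition tsum :: "tangle \<Rightarrow> tangle \<Rightarrow> tangle" where
  "tsum T U = (let T' = ren (\<lambda>p. 2 * p) T; U' = ren (\<lambda>p. 2 * p + 1) U in
     Tangle (xings T' @ xings U') (tarcs T' @ tarcs U' @ [(tNE T', tNW U'), (tSE T', tSW U')])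
       (tNW T') (tNE U') (tSW T') (tSE U'))"

definition numer :: "tangle \<Rightarrow> diagram" where
  "numer T = Diagram (xings T) (tarcs T @ [(tNW T, tNE T), (tSW T, tSE T)])"

text \<open>[1]: one crossing whose A-smoothing is [0] and B-smoothing is [infinity].\<close>
definition one_xing :: xing where "one_xing = (0, 1, 2, 3)"

definition one_tangle :: tangle where
  "one_tangle = Tangle [one_xing] [(4, 0), (5, 1), (6, 3), (7, 2)] 4 5 6 7"

text \<open>[-1]: its mirror image (A-smoothing [infinity], B-smoothing [0]).\<close>
definition mone_tangle :: tangle where
  "mone_tangle = Tangle [(1, 2, 3, 0)] [(4, 0), (5, 1), (6, 3), (7, 2)] 4 5 6 7"

definition heads :: "arc list \<Rightarrow> nat set" where
  "heads Or = set (map snd Or)"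

definition is_orientation :: "diagram \<Rightarrow> arc list \<Rightarrow> bool" where
  "is_orientation D Or \<longleftrightarrow>
     list_all2 (\<lambda>(p, q) e. e = (p, q) \<or> e = (q, p)) (darcs D) Or \<and>
     (\<forall>p. p \<notin> set (cross_pts (dxings D)) \<longrightarrow>
          count_list (map snd Or) p = count_list (map fst Or) p) \<and>
     (\<forall>(a, b, c, d) \<in> set (dxings D).
          (a \<in> heads Or) \<noteq> (c \<in> heads Or) \<and> (b \<in> heads Or) \<noteq> (d \<in> heads Or))"

text \<open>Sign of a crossing: +1 iff its A-smoothing is the orientation-respecting smoothing
(the standard characterisation of positive crossings).\<close>
fun xsign :: "arc list \<Rightarrow> xing \<Rightarrow> int" where
  "xsign Or (a, b, c, d) = (if (a \<in> heads Or) \<noteq> (b \<in> heads Or) then 1 else -1)"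

definition writhe :: "diagram \<Rightarrow> arc list \<Rightarrow> int" where
  "writhe D Or = sum_list (map (xsign Or) (dxings D))"

definition jones :: "diagram \<Rightarrow> arc list \<Rightarrow> rat fls" where
  "jones D Or = (- (Avar ^ 3)) powi (- writhe D Or) * bracket D"

end

theory Submission
  imports Defs
begin

text \<open>
  Expand the bracket of \<open>L = N(S + [1])\<close> over the states of \<open>S\<close> and the two smoothings of
  the added crossing. In every state of \<open>S\<close> the four boundary points are joined in pairs, since
  a component of a graph of maximal degree two contains zero or two points of degree one. One
  smoothing of the crossing closes these two arcs as in \<open>N(S)\<close>, the other as in the
  denominator, and a closure yields two loops if it matches the pairing of the state and one
  loop otherwise. Summing, with \<open>A d + A\<^sup>-\<^sup>1 = -A\<^sup>3\<close> and \<open>A + A\<^sup>-\<^sup>1 d = -A\<^sup>-\<^sup>3\<close> for the loop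
  value \<open>d = -A\<^sup>2 - A\<^sup>-\<^sup>2\<close>, gives \<open><L> = -A\<^sup>3 \<alpha> - A\<^sup>-\<^sup>3 \<beta>\<close> and \<open><L'> = -A\<^sup>-\<^sup>3 \<alpha> - A\<^sup>3 \<beta>\<close>
  when \<open>\<gamma> = 0\<close>. The crossings coming from \<open>[1]\<close> and \<open>[-1]\<close> have opposite signs, so
  \<open>w(L') = w(L) + 2\<close>, and equal Jones polynomials force \<open><L'> = A\<^sup>6 <L>\<close>, that is
  \<open>(A\<^sup>1\<^sup>2 - 1) \<alpha> = 0\<close>.
\<close>

section \<open>Connected components of an edge set\<close>

lemma conn_refl [simp]: "(x, x) \<in> conn E"
  by (simp add: conn_def)

lemma conn_sym: "(x, y) \<in> conn E \<Longrightarrow> (y, x) \<in> conn E"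
  unfolding conn_def by (metis converse_Un converse_converse rtrancl_converseI sup_commute)

lemma conn_trans: "(x, y) \<in> conn E \<Longrightarrow> (y, z) \<in> conn E \<Longrightarrow> (x, z) \<in> conn E"
  unfolding conn_def by (rule rtrancl_trans)

lemma conn_edge: "(x, y) \<in> E \<Longrightarrow> (x, y) \<in> conn E"
  unfolding conn_def by auto

lemma conn_mono: "E \<subseteq> F \<Longrightarrow> conn E \<subseteq> conn F"
  unfolding conn_def by (rule rtrancl_mono) auto

lemma conn_cong: "E \<union> E\<inverse> = F \<union> F\<inverse> \<Longrightarrow> conn E = conn F"
  unfolding conn_def by simp

lemma conn_Image_eq: "(x, y) \<in> conn E \<Longrightarrow> conn E `` {x} = conn E `` {y}"
  by (auto intro: conn_trans conn_sym)

lemma conn_Image_eq_iff: "conn E `` {x} = conn E `` {y} \<longleftrightarrow> (x, y) \<in> conn E"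
  by (metis Image_singleton_iff conn_Image_eq conn_refl)

lemma conn_insert:
  "(a, b) \<in> conn (insert (u, v) E) \<longleftrightarrow> (a, b) \<in> conn E \<or>
     (((u, a) \<in> conn E \<or> (v, a) \<in> conn E) \<and> ((u, b) \<in> conn E \<or> (v, b) \<in> conn E))"
proof
  assume "(a, b) \<in> conn (insert (u, v) E)"
  then have "(a, b) \<in> (insert (u, v) E \<union> (insert (u, v) E)\<inverse>)\<^sup>*" by (simp add: conn_def)
  then show "(a, b) \<in> conn E \<or>
     (((u, a) \<in> conn E \<or> (v, a) \<in> conn E) \<and> ((u, b) \<in> conn E \<or> (v, b) \<in> conn E))"
  proof (induction rule: rtrancl_induct)
    case (step y z)
    show ?case
    proof (cases "(y, z) \<in> E \<union> E\<inverse>")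
      case True
      then have "(y, z) \<in> conn E" unfolding conn_def by auto
      then show ?thesis using step.IH by (meson conn_trans)
    next
      case False
      then have "(y, z) = (u, v) \<or> (y, z) = (v, u)" using step.hyps(2) by auto
      then show ?thesis using step.IH by (auto intro: conn_sym)
    qed
  qed simp
next
  have "conn E \<subseteq> conn (insert (u, v) E)" by (rule conn_mono) auto
  moreover have "(u, v) \<in> conn (insert (u, v) E)" by (rule conn_edge) auto
  moreover assume "(a, b) \<in> conn E \<or>
     (((u, a) \<in> conn E \<or> (v, a) \<in> conn E) \<and> ((u, b) \<in> conn E \<or> (v, b) \<in> conn E))"
  ultimately show "(a, b) \<in> conn (insert (u, v) E)"
    by (meson conn_sym conn_trans subsetD)
qed

lemma conn_insert_Image:
  "conn (insert (u, v) E) `` {x} =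
    (if x \<in> conn E `` {u} \<union> conn E `` {v} then conn E `` {u} \<union> conn E `` {v} else conn E `` {x})"
proof -
  define K where "K = conn E `` {u} \<union> conn E `` {v}"
  have "conn (insert (u, v) E) `` {x} = {b. (x, b) \<in> conn E \<or> (x \<in> K \<and> b \<in> K)}"
    unfolding K_def using conn_insert[of x _ u v E] by (auto intro: conn_sym)
  also have "\<dots> = (if x \<in> K then K else conn E `` {x})"
    unfolding K_def by (auto intro: conn_sym conn_trans)
  finally show ?thesis unfolding K_def .
qed

lemma quotient_conn_insert_merge:
  assumes "u \<in> V" "(u, v) \<notin> conn E"
  defines "K \<equiv> conn E `` {u} \<union> conn E `` {v}"
  shows "V // conn (insert (u, v) E) = insert K (V // conn E - {conn E `` {u}, conn E `` {v}})"
proof (intro equalityI subsetI)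
  let ?R = "conn E" and ?R' = "conn (insert (u, v) E)"
  have component: "?R' `` {x} = (if x \<in> K then K else ?R `` {x})" for x
    unfolding K_def by (rule conn_insert_Image)
  {
    fix C assume "C \<in> V // ?R'"
    then obtain x where x: "x \<in> V" "C = ?R' `` {x}" unfolding quotient_def by auto
    show "C \<in> insert K (V // ?R - {?R `` {u}, ?R `` {v}})"
    proof (cases "x \<in> K")
      case False
      then have "?R `` {x} \<noteq> ?R `` {u}" "?R `` {x} \<noteq> ?R `` {v}"
        unfolding K_def conn_Image_eq_iff by (auto intro: conn_sym)
      then show ?thesis using x component False unfolding quotient_def by auto
    qed (use x component in auto)
  next
    fix C assume C: "C \<in> insert K (V // ?R - {?R `` {u}, ?R `` {v}})"
    show "C \<in> V // ?R'"
    proof (cases "C = K")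
      case True
      then show ?thesis using component[of u] assms(1) unfolding quotient_def K_def by auto
    next
      case False
      then obtain x where x: "x \<in> V" "C = ?R `` {x}" "C \<noteq> ?R `` {u}" "C \<noteq> ?R `` {v}"
        using C unfolding quotient_def by auto
      then have "x \<notin> K" unfolding K_def by (auto simp: conn_Image_eq_iff intro: conn_sym)
      then show ?thesis using component[of x] x unfolding quotient_def by auto
    qed
  }
qed

lemma card_quotient_conn_insert:
  assumes "finite V" "u \<in> V" "v \<in> V"
  shows "card (V // conn (insert (u, v) E)) =
    (if (u, v) \<in> conn E then card (V // conn E) else card (V // conn E) - 1)"
proof (cases "(u, v) \<in> conn E")
  case True
  then have "(a, b) \<in> conn (insert (u, v) E) \<longleftrightarrow> (a, b) \<in> conn E" for a b
    unfolding conn_insert by (meson conn_sym conn_trans)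
  then have "conn (insert (u, v) E) = conn E" by auto
  then show ?thesis using True by simp
next
  case False
  let ?R = "conn E"
  define K where "K = ?R `` {u} \<union> ?R `` {v}"
  have fin: "finite (V // ?R)" using assms(1) unfolding quotient_def by simp
  have classes: "{?R `` {u}, ?R `` {v}} \<subseteq> V // ?R" using assms unfolding quotient_def by auto
  have distinct: "?R `` {u} \<noteq> ?R `` {v}" using False conn_Image_eq_iff by metis
  have "K \<notin> V // ?R"
  proof
    assume "K \<in> V // ?R"
    then obtain y where "K = ?R `` {y}" unfolding quotient_def by auto
    moreover have "u \<in> K" "v \<in> K" unfolding K_def by auto
    ultimately have "K = ?R `` {u}" by (metis Image_singleton_iff conn_Image_eq)
    with \<open>v \<in> K\<close> show False using False by simp
  qed
  then have "card (V // conn (insert (u, v) E)) = card (V // ?R - {?R `` {u}, ?R `` {v}}) + 1"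
    unfolding quotient_conn_insert_merge[OF assms(2) False] K_def[symmetric] using fin by simp
  also have "\<dots> = card (V // ?R) - 2 + 1"
    using fin classes distinct by (subst card_Diff_subset) auto
  finally show ?thesis
    using False card_mono[OF fin classes] distinct by simp
qed

lemma conn_isolated:
  assumes "\<forall>p. (w, p) \<notin> E \<and> (p, w) \<notin> E" "(w, p) \<in> conn E"
  shows "p = w"
proof -
  have "(w, p) \<in> (E \<union> E\<inverse>)\<^sup>*" using assms(2) by (simp add: conn_def)
  then show ?thesis
    by (induction rule: rtrancl_induct) (use assms(1) in auto)
qed


lemma card_quotient_conn_subdivide:
  assumes "finite V" "u \<in> V" "v \<in> V" "w \<notin> V" "\<forall>p. (w, p) \<notin> E \<and> (p, w) \<notin> E"
  shows "card (insert w V // conn (insert (w, v) (insert (u, w) E))) = card (V // conn (insert (u, v) E))"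
proof -
  have "u \<noteq> w" "v \<noteq> w" using assms by auto
  have w_class: "conn E `` {w} = {w}" using conn_isolated[OF assms(5)] by auto
  have "{w} \<notin> V // conn E"
    using assms(4) unfolding quotient_def by (auto simp: set_eq_iff)
  then have "card (insert w V // conn E) = card (V // conn E) + 1"
    using assms(1) w_class by (simp add: quotient_def)
  moreover have "(u, w) \<notin> conn E" using conn_isolated[OF assms(5)] conn_sym \<open>u \<noteq> w\<close> by metis
  ultimately have "card (insert w V // conn (insert (u, w) E)) = card (V // conn E)"
    using card_quotient_conn_insert[of "insert w V" u w E] assms by simp
  moreover have "(w, v) \<in> conn (insert (u, w) E) \<longleftrightarrow> (u, v) \<in> conn E"
    unfolding conn_insert using conn_isolated[OF assms(5)] \<open>u \<noteq> w\<close> \<open>v \<noteq> w\<close> by (auto dest: conn_sym)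
  ultimately show ?thesis
    using card_quotient_conn_insert[of "insert w V" w v "insert (u, w) E"]
      card_quotient_conn_insert[of V u v E] assms by simp
qed

fun path_edges :: "nat \<Rightarrow> nat list \<Rightarrow> nat \<Rightarrow> arc set" where
  "path_edges a [] b = {(a, b)}"
| "path_edges a (q # qs) b = insert (a, q) (path_edges q qs b)"

lemma path_edges_endpoints:
  "(x, y) \<in> path_edges a qs b \<Longrightarrow> x \<in> insert a (set qs) \<and> y \<in> insert b (set qs)"
  by (induction a qs b rule: path_edges.induct) auto

lemma card_quotient_conn_path:
  assumes "finite V" "a \<in> V" "b \<in> V" "distinct qs" "set qs \<inter> V = {}"
    "\<forall>q \<in> set qs. \<forall>p. (q, p) \<notin> E \<and> (p, q) \<notin> E"
  shows "card ((V \<union> set qs) // conn (E \<union> path_edges a qs b)) = card (V // conn (insert (a, b) E))"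
  using assms
proof (induction qs arbitrary: a V E)
  case (Cons q qs)
  have "card ((V \<union> set (q # qs)) // conn (E \<union> path_edges a (q # qs) b))
      = card ((insert q V \<union> set qs) // conn (insert (a, q) E \<union> path_edges q qs b))"
    by (simp add: insert_commute)
  also have "\<dots> = card (insert q V // conn (insert (q, b) (insert (a, q) E)))"
    by (rule Cons.IH) (use Cons.prems in auto)
  also have "\<dots> = card (V // conn (insert (a, b) E))"
    by (rule card_quotient_conn_subdivide) (use Cons.prems in auto)
  finally show ?case .
qed simp

lemma card_quotient_conn_two_paths:
  assumes "finite V" "{a, b, c, d} \<subseteq> V" "distinct (ps @ qs)" "set (ps @ qs) \<inter> V = {}"
    "\<forall>q \<in> set (ps @ qs). \<forall>p. (q, p) \<notin> E \<and> (p, q) \<notin> E"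
  shows "card ((V \<union> set ps \<union> set qs) // conn (E \<union> path_edges a ps b \<union> path_edges c qs d))
    = card (V // conn (insert (a, b) (insert (c, d) E)))"
proof -
  have "card ((V \<union> set ps \<union> set qs) // conn (E \<union> path_edges a ps b \<union> path_edges c qs d))
      = card ((V \<union> set ps) // conn (insert (c, d) (E \<union> path_edges a ps b)))"
    by (rule card_quotient_conn_path) (use assms in \<open>auto dest: path_edges_endpoints\<close>)
  also have "\<dots> = card ((V \<union> set ps) // conn (insert (c, d) E \<union> path_edges a ps b))"
    by simp
  also have "\<dots> = card (V // conn (insert (a, b) (insert (c, d) E)))"
    by (rule card_quotient_conn_path) (use assms in auto)
  finally show ?thesis .
qed

lemma conn_map_prod_imp:
  assumes "inj f" "(f x, z) \<in> conn (map_prod f f ` E)"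
  shows "\<exists>y. z = f y \<and> (x, y) \<in> conn E"
proof -
  have "(f x, z) \<in> (map_prod f f ` E \<union> (map_prod f f ` E)\<inverse>)\<^sup>*"
    using assms(2) by (simp add: conn_def)
  then show ?thesis
  proof (induction rule: rtrancl_induct)
    case (step y z)
    then obtain y' where y': "y = f y'" "(x, y') \<in> conn E" by auto
    from step.hyps(2) obtain a b where ab: "(a, b) \<in> E" "(y, z) = (f a, f b) \<or> (y, z) = (f b, f a)"
      by auto
    then have "(y', b) \<in> conn E \<and> z = f b \<or> (y', a) \<in> conn E \<and> z = f a"
      using y'(1) assms(1) by (auto simp: inj_eq intro: conn_edge conn_sym)
    then show ?case using y'(2) by (blast intro: conn_trans)
  qed auto
qed

lemma conn_map_prod:
  assumes "(x, y) \<in> conn E"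
  shows "(f x, f y) \<in> conn (map_prod f f ` E)"
proof -
  have "(x, y) \<in> (E \<union> E\<inverse>)\<^sup>*" using assms by (simp add: conn_def)
  then show ?thesis
  proof (induction rule: rtrancl_induct)
    case (step y z)
    then have "(f y, f z) \<in> conn (map_prod f f ` E)"
      by (auto intro: conn_edge conn_sym)
    then show ?case using step.IH conn_trans by blast
  qed simp
qed

lemma conn_map_prod_Image:
  assumes "inj f"
  shows "conn (map_prod f f ` E) `` {f x} = f ` (conn E `` {x})"
  using conn_map_prod_imp[OF assms, of x _ E] conn_map_prod[of x _ E f] by blast

lemma card_quotient_conn_map_prod:
  assumes "inj f"
  shows "card ((f ` V) // conn (map_prod f f ` E)) = card (V // conn E)"
proof -
  have "(f ` V) // conn (map_prod f f ` E) = (\<lambda>C. f ` C) ` (V // conn E)"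
    unfolding quotient_def using conn_map_prod_Image[OF assms] by auto
  moreover have "inj_on (\<lambda>C. f ` C) (V // conn E)"
    by (rule inj_onI) (use assms in \<open>simp add: inj_image_eq_iff\<close>)
  ultimately show ?thesis by (simp add: card_image)
qed

section \<open>Degree-one points pair off\<close>

lemma arc_pts_Nil [simp]: "arc_pts [] = []"
  by (simp add: arc_pts_def)

lemma arc_pts_Cons [simp]: "arc_pts ((u, v) # es) = u # v # arc_pts es"
  by (simp add: arc_pts_def)

lemma arc_pts_append [simp]: "arc_pts (xs @ ys) = arc_pts xs @ arc_pts ys"
  by (simp add: arc_pts_def)

lemma arc_pts_map: "arc_pts (map (map_prod h h) as) = map h (arc_pts as)"
  by (induction as) auto

lemma not_in_arcs_if_count_arc_pts_0:
  "count_list (arc_pts es) p = 0 \<Longrightarrow> \<forall>q. (p, q) \<notin> set es \<and> (q, p) \<notin> set es"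
  by (induction es) (auto split: if_splits)

lemma card_degree_one_add_endpoint:
  assumes "u \<in> C" "c u \<le> (1::nat)" "card {p \<in> C. c p = 1} \<in> {0, 2}" "finite {p \<in> C. c p = 1}"
    "c u = 0 \<Longrightarrow> C = {u}" "\<forall>p \<in> C. c' p = c p + (if p = u then 1 else 0)"
  shows "card {p \<in> C. c' p = 1} = 1"
proof (cases "c u = 0")
  case True
  then have "{p \<in> C. c' p = 1} = {u}" using assms(5,6) by auto
  then show ?thesis by simp
next
  case False
  then have cu: "c u = 1" using assms(2) by simp
  then have "card {p \<in> C. c p = 1} \<noteq> 0" using assms(1,4) by auto
  then have "card {p \<in> C. c p = 1} = 2" using assms(3) by auto
  then obtain y where y: "y \<in> C" "c y = 1" "y \<noteq> u" "\<forall>z \<in> C. c z = 1 \<longrightarrow> z = u \<or> z = y"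
    unfolding card_2_iff' using assms(1) cu by auto metis
  have "{p \<in> C. c' p = 1} = {y}"
    using y assms(6) cu by (auto split: if_splits) (metis One_nat_def Suc_1 n_not_Suc_n)
  then show ?thesis by simp
qed

lemma card_degree_one_join_components:
  fixes c c' :: "nat \<Rightarrow> nat"
  assumes "(u, v) \<notin> conn E"
    and components: "\<And>y. card {p \<in> conn E `` {y}. c p = 1} \<in> {0, 2}"
    and finite: "finite {p. c p = 1}"
    and isolated: "\<And>p. c p = 0 \<Longrightarrow> conn E `` {p} = {p}"
    and degree: "\<And>p. c' p = c p + (if p = u then 1 else 0) + (if p = v then 1 else 0)"
    and le2: "\<And>p. c' p \<le> 2"
  shows "card {p \<in> conn E `` {u} \<union> conn E `` {v}. c' p = 1} = 2"
proof -
  have "u \<noteq> v" using assms(1) by auto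
  have endpoint: "card {p \<in> conn E `` {w}. c' p = 1} = 1"
    if "w \<in> {u, v}" "\<forall>p \<in> conn E `` {w}. c' p = c p + (if p = w then 1 else 0)" for w
  proof (rule card_degree_one_add_endpoint[where c = c])
    show "c w \<le> 1" using le2[of w] degree[of w] \<open>u \<noteq> v\<close> that(1) by auto
    show "finite {p \<in> conn E `` {w}. c p = 1}" by (rule finite_subset[OF _ finite]) auto
  qed (use that components isolated in auto)
  have "\<forall>p \<in> conn E `` {u}. c' p = c p + (if p = u then 1 else 0)"
    "\<forall>p \<in> conn E `` {v}. c' p = c p + (if p = v then 1 else 0)"
    using assms(1) degree by (auto intro: conn_sym)
  then have "card {p \<in> conn E `` {u}. c' p = 1} = 1" "card {p \<in> conn E `` {v}. c' p = 1} = 1"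
    using endpoint by auto
  moreover have "{p \<in> conn E `` {u}. c' p = 1} \<inter> {p \<in> conn E `` {v}. c' p = 1} = {}"
    using assms(1) by (auto intro: conn_sym conn_trans)
  ultimately have "card ({p \<in> conn E `` {u}. c' p = 1} \<union> {p \<in> conn E `` {v}. c' p = 1}) = 2"
    by (subst card_Un_disjoint) (auto intro: card_ge_0_finite)
  moreover have "{p \<in> conn E `` {u} \<union> conn E `` {v}. c' p = 1}
      = {p \<in> conn E `` {u}. c' p = 1} \<union> {p \<in> conn E `` {v}. c' p = 1}"
    by auto
  ultimately show ?thesis by simp
qed

lemma no_degree_one_close_component:
  fixes c c' :: "nat \<Rightarrow> nat"
  assumes "(u, v) \<in> conn E" "u \<noteq> v"
    and components: "\<And>y. card {p \<in> conn E `` {y}. c p = 1} \<in> {0, 2}"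
    and finite: "finite {p. c p = 1}"
    and isolated: "\<And>p. c p = 0 \<Longrightarrow> conn E `` {p} = {p}"
    and degree: "\<And>p. c' p = c p + (if p = u then 1 else 0) + (if p = v then 1 else 0)"
    and le2: "\<And>p. c' p \<le> 2"
  shows "{p \<in> conn E `` {u}. c' p = 1} = {}"
proof -
  have "c u \<noteq> 0" using isolated[of u] assms(1,2) by (metis Image_singleton_iff singletonD)
  moreover have "c v \<noteq> 0"
    using isolated[of v] conn_sym[OF assms(1)] assms(2) by (metis Image_singleton_iff singletonD)
  ultimately have "c u = 1" "c v = 1" using le2[of u] le2[of v] degree[of u] degree[of v] assms(2) by auto
  then have ends: "{u, v} \<subseteq> {p \<in> conn E `` {u}. c p = 1}" using assms(1) by auto
  moreover have "finite {p \<in> conn E `` {u}. c p = 1}" by (rule finite_subset[OF _ finite]) auto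
  ultimately have "card {p \<in> conn E `` {u}. c p = 1} \<noteq> 0" by auto
  then have "card {p \<in> conn E `` {u}. c p = 1} = card {u, v}"
    using components[of u] assms(2) by auto
  then have pair: "{p \<in> conn E `` {u}. c p = 1} = {u, v}"
    using ends \<open>finite {p \<in> conn E `` {u}. c p = 1}\<close> by (metis card_subset_eq)
  have False if "p \<in> conn E `` {u}" "c' p = 1" for p
  proof -
    have "p \<noteq> u" "p \<noteq> v" using that(2) degree[of p] \<open>c u = 1\<close> \<open>c v = 1\<close> by auto
    then show False using that degree[of p] pair by auto
  qed
  then show ?thesis by blast
qed

lemma card_degree_one_insert_edge:
  fixes c c' :: "nat \<Rightarrow> nat"
  assumes components: "\<And>y. card {p \<in> conn E `` {y}. c p = 1} \<in> {0, 2}"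
    and finite: "finite {p. c p = 1}"
    and isolated: "\<And>p. c p = 0 \<Longrightarrow> conn E `` {p} = {p}"
    and degree: "\<And>p. c' p = c p + (if p = u then 1 else 0) + (if p = v then 1 else 0)"
    and le2: "\<And>p. c' p \<le> 2"
  shows "card {p \<in> conn E `` {u} \<union> conn E `` {v}. c' p = 1} \<in> {0, 2}"
proof -
  consider "u = v" | "u \<noteq> v" "(u, v) \<in> conn E" | "(u, v) \<notin> conn E" by auto
  then show ?thesis
  proof cases
    case 1
    then have "conn E `` {u} \<union> conn E `` {v} = {u}" using isolated le2[of u] degree[of u] by simp
    then show ?thesis using degree 1 by simp
  next
    case 2
    then have "conn E `` {u} \<union> conn E `` {v} = conn E `` {u}" using conn_Image_eq by auto
    then have "{p \<in> conn E `` {u} \<union> conn E `` {v}. c' p = 1} = {}"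
      using no_degree_one_close_component[OF 2(2,1) components finite isolated degree le2] by (simp only:)
    then show ?thesis by (metis card.empty insertI1)
  next
    case 3
    then show ?thesis
      using card_degree_one_join_components[OF 3 components finite isolated degree le2] by simp
  qed
qed

lemma card_degree_one_in_component:
  assumes "\<forall>p. count_list (arc_pts es) p \<le> 2"
  shows "card {p \<in> conn (set es) `` {x}. count_list (arc_pts es) p = 1} \<in> {0, 2}"
  using assms
proof (induction es arbitrary: x)
  case (Cons e es)
  obtain u v where e: "e = (u, v)" by force
  define c where "c = count_list (arc_pts es)"
  define c' where "c' = count_list (arc_pts (e # es))"
  let ?R = "conn (set es)"
  define K where "K = ?R `` {u} \<union> ?R `` {v}"
  have degree: "c' p = c p + (if p = u then 1 else 0) + (if p = v then 1 else 0)" for p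
    unfolding c'_def c_def e by simp
  have le2: "c' p \<le> 2" for p using Cons.prems c'_def by simp
  have "\<forall>p. c p \<le> 2" using le2 degree by (metis add_leE)
  then have components: "card {p \<in> ?R `` {y}. c p = 1} \<in> {0, 2}" for y
    using Cons.IH c_def by simp
  have finite: "finite {p. c p = 1}"
  proof (rule finite_subset)
    show "{p. c p = 1} \<subseteq> set (arc_pts es)"
      unfolding c_def by (auto intro: ccontr simp: count_notin)
  qed simp
  have isolated: "c p = 0 \<Longrightarrow> ?R `` {p} = {p}" for p
    using conn_isolated[OF not_in_arcs_if_count_arc_pts_0[of es p]] c_def by auto
  have component: "conn (set (e # es)) `` {x} = (if x \<in> K then K else ?R `` {x})"
    unfolding e K_def by (simp add: conn_insert_Image)
  show ?case
  proof (cases "x \<in> K")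
    case False
    then have "\<forall>p \<in> ?R `` {x}. p \<noteq> u \<and> p \<noteq> v" unfolding K_def by (auto intro: conn_sym)
    then have "{p \<in> ?R `` {x}. c' p = 1} = {p \<in> ?R `` {x}. c p = 1}" using degree by auto
    then show ?thesis using components[of x] component False c'_def by simp
  next
    case True
    then show ?thesis
      using card_degree_one_insert_edge[OF components finite isolated degree le2] component c'_def
      unfolding K_def by simp
  qed
qed simp

lemma cross_pts_Nil [simp]: "cross_pts [] = []"
  by (simp add: cross_pts_def)

lemma cross_pts_Cons [simp]: "cross_pts (c # cs) = xpts c @ cross_pts cs"
  by (simp add: cross_pts_def)

lemma cross_pts_append [simp]: "cross_pts (xs @ ys) = cross_pts xs @ cross_pts ys"
  by (simp add: cross_pts_def)

lemma cross_pts_map: "cross_pts (map (map_xing h) cs) = map h (cross_pts cs)"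
  by (induction cs) (auto simp: split_pairs)

lemma count_list_distinct: "distinct xs \<Longrightarrow> count_list xs p = (if p \<in> set xs then 1 else 0)"
  by (induction xs) auto

lemma count_arc_pts_smoothings:
  "length s = length cs \<Longrightarrow>
   count_list (arc_pts (concat (map (\<lambda>(b, c). smooth b c) (zip s cs)))) p = count_list (cross_pts cs) p"
proof (induction cs arbitrary: s)
  case (Cons c cs)
  then obtain b s' where "s = b # s'" "length s' = length cs" by (cases s) auto
  with Cons.IH show ?case by (cases c; cases b) auto
qed simp

lemma smooth_map_xing: "smooth b (map_xing h c) = map (map_prod h h) (smooth b c)"
  by (cases c; cases b) auto

lemma smoothings_map_xing:
  "concat (map (\<lambda>(b, c). smooth b c) (zip s (map (map_xing h) cs)))
   = map (map_prod h h) (concat (map (\<lambda>(b, c). smooth b c) (zip s cs)))"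
proof (induction cs arbitrary: s)
  case (Cons c cs)
  then show ?case by (cases s) (auto simp: smooth_map_xing)
qed simp

lemma state_edges_map:
  "state_edges (map (map_xing h) cs) (map (map_prod h h) as @ ex) s
   = map_prod h h ` state_edges cs as s \<union> set ex"
  unfolding state_edges_def smoothings_map_xing by (simp only: set_append set_map image_Un Un_ac)

lemma state_edges_snoc:
  "length s = length cs \<Longrightarrow>
   state_edges (cs @ [x]) as (s @ [b]) = state_edges cs as s \<union> set (smooth b x)"
  unfolding state_edges_def by auto

lemma sum_states_Suc:
  "(\<Sum>s\<in>states (Suc n). f s) = (\<Sum>s\<in>states n. f (s @ [True]) + f (s @ [False]))"
proof -
  have snoc: "states (Suc n) = (\<lambda>(s, b). s @ [b]) ` (states n \<times> UNIV)"
  proof (intro equalityI subsetI)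
    fix s assume "s \<in> states (Suc n)"
    then have "s = butlast s @ [last s]" "butlast s \<in> states n"
      by (auto simp: states_def intro!: append_butlast_last_id[symmetric])
    then show "s \<in> (\<lambda>(s, b). s @ [b]) ` (states n \<times> UNIV)" by force
  qed (auto simp: states_def)
  have inj: "inj_on (\<lambda>(s, b). s @ [b]) (states n \<times> (UNIV :: bool set))"
    by (rule inj_onI) auto
  have "(\<Sum>s\<in>states (Suc n). f s) = (\<Sum>(s, b)\<in>states n \<times> UNIV. f (s @ [b]))"
    unfolding snoc by (subst sum.reindex[OF inj]) (simp add: case_prod_beta)
  also have "\<dots> = (\<Sum>s\<in>states n. \<Sum>b\<in>UNIV. f (s @ [b]))"
    by (rule sum.cartesian_product[symmetric])
  finally show ?thesis by (simp add: UNIV_bool add.commute)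
qed

lemma Avar_nonzero [simp]: "Avar \<noteq> 0"
  by (simp add: Avar_def fls_X_nonzero)

lemma state_weight_snoc:
  "state_weight (s @ [b]) = state_weight s * (if b then Avar else inverse Avar)"
proof -
  define m where "m = int (count_list s True) - int (count_list s False)"
  have "state_weight (s @ [b]) = Avar powi (m + (if b then 1 else - 1))"
    unfolding state_weight_def m_def by (cases b) (simp_all add: algebra_simps)
  also have "\<dots> = state_weight s * (if b then Avar else inverse Avar)"
    unfolding state_weight_def m_def by (simp add: power_int_add)
  finally show ?thesis .
qed

section \<open>The boundary pairing of a tangle state\<close>

definition pairs_off :: "(nat \<times> nat) set \<Rightarrow> nat \<Rightarrow> nat \<Rightarrow> nat \<Rightarrow> nat \<Rightarrow> bool" where
  "pairs_off R a b c d \<longleftrightarrow>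
     ((a, b) \<in> R \<longleftrightarrow> (c, d) \<in> R) \<and> ((a, c) \<in> R \<longleftrightarrow> (b, d) \<in> R) \<and> ((a, d) \<in> R \<longleftrightarrow> (b, c) \<in> R) \<and>
     ((a, b) \<in> R \<or> (a, c) \<in> R \<or> (a, d) \<in> R) \<and>
     \<not> ((a, b) \<in> R \<and> (a, c) \<in> R) \<and> \<not> ((a, b) \<in> R \<and> (a, d) \<in> R) \<and> \<not> ((a, c) \<in> R \<and> (a, d) \<in> R)"

lemma card_filter_four:
  assumes "distinct [a, b, c, d]"
  shows "card {p \<in> {a, b, c, d}. P p} =
    (if P a then 1 else 0) + (if P b then 1 else 0) + (if P c then 1 else 0) + (if P d then 1 else 0)"
proof -
  have "card {p \<in> {a, b, c, d}. P p} = (\<Sum>p\<in>{a, b, c, d}. if P p then 1 else 0)"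
    by (simp add: sum.inter_filter[symmetric])
  then show ?thesis using assms by (simp add: add.assoc)
qed

lemma pairs_offI:
  fixes R :: "(nat \<times> nat) set"
  assumes "distinct [a, b, c, d]" "\<And>x y. (x, y) \<in> R \<Longrightarrow> (y, x) \<in> R" "\<And>x. (x, x) \<in> R"
    and "\<And>x. x \<in> {a, b, c, d} \<Longrightarrow> card {p \<in> {a, b, c, d}. (x, p) \<in> R} = 2"
  shows "pairs_off R a b c d"
proof -
  have sym: "(x, y) \<in> R \<longleftrightarrow> (y, x) \<in> R" for x y using assms(2) by blast
  have "(if (a, b) \<in> R then 1 else 0) + (if (a, c) \<in> R then 1 else 0) + (if (a, d) \<in> R then 1 else (0::nat)) = 1"
    "(if (a, b) \<in> R then 1 else 0) + (if (b, c) \<in> R then 1 else 0) + (if (b, d) \<in> R then 1 else (0::nat)) = 1"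
    "(if (a, c) \<in> R then 1 else 0) + (if (b, c) \<in> R then 1 else 0) + (if (c, d) \<in> R then 1 else (0::nat)) = 1"
    "(if (a, d) \<in> R then 1 else 0) + (if (b, d) \<in> R then 1 else 0) + (if (c, d) \<in> R then 1 else (0::nat)) = 1"
    using assms(4)[of a] assms(4)[of b] assms(4)[of c] assms(4)[of d] assms(1,3)
    by (simp_all only: card_filter_four)
      (simp_all add: sym[of b a] sym[of c a] sym[of d a] sym[of c b] sym[of d b] sym[of d c])
  then show ?thesis
    unfolding pairs_off_def
    by (cases "(a, b) \<in> R"; cases "(a, c) \<in> R"; cases "(a, d) \<in> R";
        cases "(b, c) \<in> R"; cases "(b, d) \<in> R"; cases "(c, d) \<in> R") simp_all
qed

lemma pairs_off_cases:
  assumes "pairs_off (conn E) a b c d"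
  obtains (ab_cd) "(a, b) \<in> conn E" "(c, d) \<in> conn E" "(a, c) \<notin> conn E" "(a, d) \<notin> conn E"
     "(b, c) \<notin> conn E" "(b, d) \<notin> conn E"
  | (ac_bd) "(a, c) \<in> conn E" "(b, d) \<in> conn E" "(a, b) \<notin> conn E" "(a, d) \<notin> conn E"
     "(b, c) \<notin> conn E" "(c, d) \<notin> conn E"
  | (ad_bc) "(a, d) \<in> conn E" "(b, c) \<in> conn E" "(a, b) \<notin> conn E" "(a, c) \<notin> conn E"
     "(b, d) \<notin> conn E" "(c, d) \<notin> conn E"
  using assms that unfolding pairs_off_def by blast

lemma pairs_off_swap: "pairs_off (conn E) a b c d \<Longrightarrow> pairs_off (conn E) a c b d"
  unfolding pairs_off_def by (metis conn_sym)

lemma card_classes_pairs_off: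
  assumes "pairs_off (conn E) a b c d"
  shows "card ((\<lambda>x. conn E `` {x}) ` {a, b, c, d}) = 2"
  using assms
proof (cases rule: pairs_off_cases)
  case ab_cd
  then have "(\<lambda>x. conn E `` {x}) ` {a, b, c, d} = {conn E `` {a}, conn E `` {c}}"
    "conn E `` {a} \<noteq> conn E `` {c}"
    by (auto simp: conn_Image_eq_iff dest: conn_Image_eq)
  then show ?thesis by simp
next
  case ac_bd
  then have "(\<lambda>x. conn E `` {x}) ` {a, b, c, d} = {conn E `` {a}, conn E `` {b}}"
    "conn E `` {a} \<noteq> conn E `` {b}"
    by (auto simp: conn_Image_eq_iff dest: conn_Image_eq)
  then show ?thesis by simp
next
  case ad_bc
  then have "(\<lambda>x. conn E `` {x}) ` {a, b, c, d} = {conn E `` {a}, conn E `` {b}}"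
    "conn E `` {a} \<noteq> conn E `` {b}"
    by (auto simp: conn_Image_eq_iff dest: conn_Image_eq)
  then show ?thesis by simp
qed

lemma card_quotient_split:
  assumes "finite P" "B \<subseteq> P"
  shows "card (P // conn E) = card {C \<in> P // conn E. C \<inter> B = {}} + card ((\<lambda>x. conn E `` {x}) ` B)"
proof -
  have "(\<lambda>x. conn E `` {x}) ` B = {C \<in> P // conn E. C \<inter> B \<noteq> {}}"
  proof (intro equalityI subsetI)
    fix C assume "C \<in> {C \<in> P // conn E. C \<inter> B \<noteq> {}}"
    then obtain y b where "C = conn E `` {y}" "b \<in> C" "b \<in> B" unfolding quotient_def by auto
    then show "C \<in> (\<lambda>x. conn E `` {x}) ` B" using conn_Image_eq by auto
  qed (use assms(2) in \<open>force simp: quotient_def\<close>)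
  moreover have "finite (P // conn E)" using assms(1) unfolding quotient_def by simp
  then have "card (P // conn E)
      = card {C \<in> P // conn E. C \<inter> B = {}} + card {C \<in> P // conn E. C \<inter> B \<noteq> {}}"
    by (subst card_Un_disjoint[symmetric]) (auto intro: arg_cong[where f = card])
  ultimately show ?thesis by simp
qed

lemma degree_tangle_state:
  assumes "tangle_wf S" "length s = length (xings S)"
  defines "es \<equiv> tarcs S @ concat (map (\<lambda>(b, c). smooth b c) (zip s (xings S)))"
  shows "set es = state_edges (xings S) (tarcs S) s"
    and "count_list (arc_pts es) p \<le> 2"
    and "count_list (arc_pts es) p = 1 \<longleftrightarrow> p \<in> {tNW S, tNE S, tSW S, tSE S}"
proof -
  show "set es = state_edges (xings S) (tarcs S) s" by (simp add: es_def state_edges_def)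
  let ?B = "{tNW S, tNE S, tSW S, tSE S}" and ?X = "set (cross_pts (xings S))"
  have "count_list (arc_pts es) p = count_list (arc_pts (tarcs S)) p + (if p \<in> ?X then 1 else 0)"
    using assms(1,2) unfolding es_def tangle_wf_def
    by (simp add: count_arc_pts_smoothings count_list_distinct)
  moreover have "?B \<inter> ?X = {}"
    and "p \<in> ?X \<union> ?B \<Longrightarrow> count_list (arc_pts (tarcs S)) p = 1"
    and "p \<notin> ?X \<union> ?B \<Longrightarrow> count_list (arc_pts (tarcs S)) p \<in> {0, 2}"
    using assms(1) unfolding tangle_wf_def by blast+
  ultimately show "count_list (arc_pts es) p \<le> 2"
    and "count_list (arc_pts es) p = 1 \<longleftrightarrow> p \<in> ?B"
    by (cases "p \<in> ?X \<union> ?B"; auto)+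
qed

lemma boundary_subset_dpts:
  assumes "tangle_wf S"
  shows "{tNW S, tNE S, tSW S, tSE S} \<subseteq> dpts (xings S) (tarcs S)"
proof
  fix p assume "p \<in> {tNW S, tNE S, tSW S, tSE S}"
  then have "count_list (arc_pts (tarcs S)) p = 1" using assms unfolding tangle_wf_def by blast
  then show "p \<in> dpts (xings S) (tarcs S)" by (auto simp: dpts_def intro: ccontr)
qed

lemma pairs_off_tangle_state:
  assumes "tangle_wf S" "length s = length (xings S)"
  shows "pairs_off (conn (state_edges (xings S) (tarcs S) s)) (tNW S) (tNE S) (tSW S) (tSE S)"
proof (rule pairs_offI)
  let ?B = "{tNW S, tNE S, tSW S, tSE S}" and ?R = "conn (state_edges (xings S) (tarcs S) s)"
  show "distinct [tNW S, tNE S, tSW S, tSE S]" using assms(1) by (simp add: tangle_wf_def)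
  show "(x, y) \<in> ?R \<Longrightarrow> (y, x) \<in> ?R" for x y by (rule conn_sym)
  show "(x, x) \<in> ?R" for x by simp
  fix x assume "x \<in> ?B"
  then have "x \<in> {p \<in> ?B. (x, p) \<in> ?R}" by simp
  then have "card {p \<in> ?B. (x, p) \<in> ?R} \<noteq> 0" by auto
  moreover
  define es where "es = tarcs S @ concat (map (\<lambda>(b, c). smooth b c) (zip s (xings S)))"
  have "card {p \<in> conn (set es) `` {x}. count_list (arc_pts es) p = 1} \<in> {0, 2}"
    using degree_tangle_state(2)[OF assms] unfolding es_def by (intro card_degree_one_in_component) blast
  moreover have "{p \<in> conn (set es) `` {x}. count_list (arc_pts es) p = 1} = {p \<in> ?B. (x, p) \<in> ?R}"
    unfolding es_def degree_tangle_state(1,3)[OF assms] by auto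
  ultimately show "card {p \<in> ?B. (x, p) \<in> ?R} = 2" by auto
qed

lemma card_tangle_state_components:
  assumes "tangle_wf S" "length s = length (xings S)"
  shows "card (dpts (xings S) (tarcs S) // conn (state_edges (xings S) (tarcs S) s)) = tloops S s + 2"
proof -
  let ?B = "{tNW S, tNE S, tSW S, tSE S}" and ?R = "conn (state_edges (xings S) (tarcs S) s)"
  have "tpts S = dpts (xings S) (tarcs S)"
    using boundary_subset_dpts[OF assms(1)] unfolding tpts_def by auto
  then have "tloops S s = card {C \<in> dpts (xings S) (tarcs S) // ?R. C \<inter> ?B = {}}"
    unfolding tloops_def by (intro arg_cong[where f = card]) auto
  then show ?thesis
    using card_quotient_split[OF _ boundary_subset_dpts[OF assms(1)]]
      card_classes_pairs_off[OF pairs_off_tangle_state[OF assms]]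
    by (simp add: dpts_def)
qed

section \<open>Closing a tangle state by two arcs\<close>

lemma converse_insert_pair: "(insert (a, b) r)\<inverse> = insert (b, a) (r\<inverse>)"
  by auto

lemma conn_Un_cong: "F \<union> F\<inverse> = G \<union> G\<inverse> \<Longrightarrow> conn (E \<union> F) = conn (E \<union> G)"
  by (rule conn_cong) auto

lemma card_quotient_conn_close_pairs:
  assumes "finite V" "{a, b, c, d} \<subseteq> V" "pairs_off (conn E) a b c d"
  shows "card (V // conn (insert (a, b) (insert (c, d) E))) =
    (if (a, b) \<in> conn E then card (V // conn E) else card (V // conn E) - 1)"
  using assms(3)
proof (cases rule: pairs_off_cases)
  case ab_cd
  then show ?thesis using assms(1,2) by (simp add: card_quotient_conn_insert conn_insert)
next
  case ac_bd
  then have "(a, b) \<in> conn (insert (c, d) E)" by (auto simp: conn_insert intro: conn_sym)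
  then show ?thesis using ac_bd assms(1,2) by (simp add: card_quotient_conn_insert)
next
  case ad_bc
  then have "(a, b) \<in> conn (insert (c, d) E)" by (auto simp: conn_insert intro: conn_sym)
  then show ?thesis using ad_bc assms(1,2) by (simp add: card_quotient_conn_insert)
qed

lemma card_components_closed_tangle_state:
  fixes h :: "nat \<Rightarrow> nat"
  assumes "tangle_wf S" "length s = length (xings S)" "inj h"
    and "{a, b, c, d} = {tNW S, tNE S, tSW S, tSE S}"
    and "pairs_off (conn (state_edges (xings S) (tarcs S) s)) a b c d"
    and "distinct (ps @ qs)" "set (ps @ qs) \<inter> range h = {}"
  shows "card ((h ` dpts (xings S) (tarcs S) \<union> set ps \<union> set qs) //
      conn (map_prod h h ` state_edges (xings S) (tarcs S) s \<union>
        path_edges (h a) ps (h b) \<union> path_edges (h c) qs (h d)))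
    = tloops S s + (if (a, b) \<in> conn (state_edges (xings S) (tarcs S) s) then 2 else 1)"
proof -
  define E where "E = state_edges (xings S) (tarcs S) s"
  define P where "P = dpts (xings S) (tarcs S)"
  have "finite P" by (simp add: P_def dpts_def)
  have "{a, b, c, d} \<subseteq> P" using boundary_subset_dpts[OF assms(1)] assms(4) by (simp add: P_def)
  have "card ((h ` P \<union> set ps \<union> set qs) //
      conn (map_prod h h ` E \<union> path_edges (h a) ps (h b) \<union> path_edges (h c) qs (h d)))
      = card ((h ` P) // conn (insert (h a, h b) (insert (h c, h d) (map_prod h h ` E))))"
    by (rule card_quotient_conn_two_paths)
      (use assms(6,7) \<open>finite P\<close> \<open>{a, b, c, d} \<subseteq> P\<close> in auto)
  also have "\<dots> = card ((h ` P) // conn (map_prod h h ` insert (a, b) (insert (c, d) E)))"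
    by simp
  also have "\<dots> = card (P // conn (insert (a, b) (insert (c, d) E)))"
    by (rule card_quotient_conn_map_prod[OF assms(3)])
  also have "\<dots> = (if (a, b) \<in> conn E then card (P // conn E) else card (P // conn E) - 1)"
    by (rule card_quotient_conn_close_pairs) (use assms(5) \<open>finite P\<close> \<open>{a, b, c, d} \<subseteq> P\<close> E_def in auto)
  also have "card (P // conn E) = tloops S s + 2"
    unfolding P_def E_def by (rule card_tangle_state_components[OF assms(1,2)])
  finally show ?thesis by (simp add: E_def P_def)
qed

section \<open>The bracket of \<open>N(S + [1])\<close> and \<open>N(S + [-1])\<close>\<close>

text \<open>The shape of \<open>S + [\<pm>1]\<close> as built by \<^const>\<open>tsum\<close>: the points of \<open>S\<close> are doubled and
  the crossing of \<open>[\<pm>1]\<close> becomes \<open>x\<close>.\<close>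

definition tsum_crossing :: "tangle \<Rightarrow> tangle \<Rightarrow> xing \<Rightarrow> bool" where
  "tsum_crossing T S x \<longleftrightarrow>
     xings T = map (map_xing (\<lambda>p. 2 * p)) (xings S) @ [x] \<and>
     tarcs T = map (map_prod (\<lambda>p. 2 * p) (\<lambda>p. 2 * p)) (tarcs S) @
       [(9, 1), (11, 3), (13, 7), (15, 5), (2 * tNE S, 9), (2 * tSE S, 13)] \<and>
     tNW T = 2 * tNW S \<and> tNE T = 11 \<and> tSW T = 2 * tSW S \<and> tSE T = 15 \<and>
     (x = (1, 3, 5, 7) \<or> x = (3, 5, 7, 1))"

lemma tsum_crossing_one_tangle: "tsum_crossing (tsum S one_tangle) S (1, 3, 5, 7)"
  by (simp add: tsum_crossing_def tsum_def ren_def one_tangle_def one_xing_def Let_def)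

lemma tsum_crossing_mone_tangle: "tsum_crossing (tsum S mone_tangle) S (3, 5, 7, 1)"
  by (simp add: tsum_crossing_def tsum_def ren_def mone_tangle_def Let_def)

lemma dpts_numer_tsum_crossing:
  assumes "tangle_wf S" "tsum_crossing T S x"
  shows "dpts (dxings (numer T)) (darcs (numer T))
    = (\<lambda>p. 2 * p) ` dpts (xings S) (tarcs S) \<union> {1, 3, 5, 7, 9, 11, 13, 15}"
  using assms(2) boundary_subset_dpts[OF assms(1)]
  by (auto simp: tsum_crossing_def numer_def dpts_def cross_pts_map arc_pts_map)

lemma state_edges_numer_tsum_crossing:
  assumes "tsum_crossing T S x" "length s = length (xings S)"
  shows "state_edges (dxings (numer T)) (darcs (numer T)) (s @ [b]) =
    map_prod (\<lambda>p. 2 * p) (\<lambda>p. 2 * p) ` state_edges (xings S) (tarcs S) s \<union>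
    set [(9, 1), (11, 3), (13, 7), (15, 5), (2 * tNE S, 9), (2 * tSE S, 13), (2 * tNW S, 11), (2 * tSW S, 15)] \<union>
    set (smooth b x)"
  using assms unfolding tsum_crossing_def numer_def
  by (simp add: state_edges_snoc state_edges_map del: set_simps)

lemma odd_disjoint_range_double: "\<forall>q \<in> Q. odd q \<Longrightarrow> Q \<inter> range (\<lambda>p::nat. 2 * p) = {}"
  by auto

text \<open>If \<open>(x = (1, 3, 5, 7)) = b\<close>, the smoothing \<open>b\<close> of \<open>x\<close> is the \<open>[0]\<close>-smoothing of \<open>[\<pm>1]\<close>,
  so it closes the states of \<open>S\<close> as in \<open>N(S)\<close>; otherwise as in the denominator of \<open>S\<close>.\<close>

lemma card_components_numer_tsum_zero:
  assumes "tangle_wf S" "tsum_crossing T S x" "length s = length (xings S)" "(x = (1, 3, 5, 7)) = b"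
  shows "card (dpts (dxings (numer T)) (darcs (numer T)) //
      conn (state_edges (dxings (numer T)) (darcs (numer T)) (s @ [b])))
    = tloops S s + (if (tNW S, tNE S) \<in> conn (state_edges (xings S) (tarcs S) s) then 2 else 1)"
proof -
  define h where "h = (\<lambda>p::nat. 2 * p)"
  define hE where "hE = map_prod h h ` state_edges (xings S) (tarcs S) s"
  have "inj h" unfolding h_def by (rule injI) simp
  have "set (smooth b x) \<union> (set (smooth b x))\<inverse> = {(3, 1), (5, 7)} \<union> {(3, 1), (5, 7)}\<inverse>"
    using assms(2,4) unfolding tsum_crossing_def by (cases b) (auto simp: insert_commute)
  then have "conn (state_edges (dxings (numer T)) (darcs (numer T)) (s @ [b])) = conn (hE \<union>
      set [(9, 1), (11, 3), (13, 7), (15, 5), (h (tNE S), 9), (h (tSE S), 13), (h (tNW S), 11), (h (tSW S), 15)]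
      \<union> {(3, 1), (5, 7)})"
    unfolding state_edges_numer_tsum_crossing[OF assms(2,3)] hE_def h_def by (rule conn_Un_cong)
  also have "\<dots> = conn (hE \<union>
      (path_edges (h (tNW S)) [11, 3, 1, 9] (h (tNE S)) \<union> path_edges (h (tSW S)) [15, 5, 7, 13] (h (tSE S))))"
    unfolding Un_assoc
    by (rule conn_Un_cong, simp only: converse_Un converse_insert_pair converse_empty set_simps
        Un_insert_left Un_insert_right Un_empty_left Un_empty_right path_edges.simps)
      (simp only: insert_commute insert_absorb2)
  finally show ?thesis
    unfolding dpts_numer_tsum_crossing[OF assms(1,2)] hE_def Un_assoc[symmetric]
    using card_components_closed_tangle_state[OF assms(1,3) \<open>inj h\<close> _
        pairs_off_tangle_state[OF assms(1,3)], of "[11, 3, 1, 9]" "[15, 5, 7, 13]"]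
      odd_disjoint_range_double[of "set [11, 3, 1, 9, 15, 5, 7, 13]"]
    by (simp add: h_def insert_commute)
qed

lemma card_components_numer_tsum_infinity:
  assumes "tangle_wf S" "tsum_crossing T S x" "length s = length (xings S)" "(x = (1, 3, 5, 7)) \<noteq> b"
  shows "card (dpts (dxings (numer T)) (darcs (numer T)) //
      conn (state_edges (dxings (numer T)) (darcs (numer T)) (s @ [b])))
    = tloops S s + (if (tNW S, tSW S) \<in> conn (state_edges (xings S) (tarcs S) s) then 2 else 1)"
proof -
  define h where "h = (\<lambda>p::nat. 2 * p)"
  define hE where "hE = map_prod h h ` state_edges (xings S) (tarcs S) s"
  have "inj h" unfolding h_def by (rule injI) simp
  have "set (smooth b x) \<union> (set (smooth b x))\<inverse> = {(1, 7), (3, 5)} \<union> {(1, 7), (3, 5)}\<inverse>"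
    using assms(2,4) unfolding tsum_crossing_def by (cases b) (auto simp: insert_commute)
  then have "conn (state_edges (dxings (numer T)) (darcs (numer T)) (s @ [b])) = conn (hE \<union>
      set [(9, 1), (11, 3), (13, 7), (15, 5), (h (tNE S), 9), (h (tSE S), 13), (h (tNW S), 11), (h (tSW S), 15)]
      \<union> {(1, 7), (3, 5)})"
    unfolding state_edges_numer_tsum_crossing[OF assms(2,3)] hE_def h_def by (rule conn_Un_cong)
  also have "\<dots> = conn (hE \<union>
      (path_edges (h (tNW S)) [11, 3, 5, 15] (h (tSW S)) \<union> path_edges (h (tNE S)) [9, 1, 7, 13] (h (tSE S))))"
    unfolding Un_assoc
    by (rule conn_Un_cong, simp only: converse_Un converse_insert_pair converse_empty set_simps
        Un_insert_left Un_insert_right Un_empty_left Un_empty_right path_edges.simps)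
      (simp only: insert_commute insert_absorb2)
  finally show ?thesis
    unfolding dpts_numer_tsum_crossing[OF assms(1,2)] hE_def Un_assoc[symmetric]
    using card_components_closed_tangle_state[OF assms(1,3) \<open>inj h\<close> _
        pairs_off_swap[OF pairs_off_tangle_state[OF assms(1,3)]], of "[11, 3, 5, 15]" "[9, 1, 7, 13]"]
      odd_disjoint_range_double[of "set [11, 3, 5, 15, 9, 1, 7, 13]"]
    by (simp add: h_def insert_commute)
qed

definition state_term :: "diagram \<Rightarrow> bool list \<Rightarrow> rat fls" where
  "state_term D s = state_weight s *
     dloop powi (int (card (dpts (dxings D) (darcs D) // conn (state_edges (dxings D) (darcs D) s))) - 1)"

lemma bracket_eq_sum_state_term: "bracket D = (\<Sum>s\<in>states (length (dxings D)). state_term D s)"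
  by (simp add: bracket_def state_term_def)

lemma dloop_powi_components:
  "dloop powi (int (k + (if P then 2 else 1)) - 1) = dloop ^ k * (if P then dloop else 1)"
proof -
  have "int (k + (if P then 2 else 1)) - 1 = int (if P then k + 1 else k)" by simp
  then show ?thesis by (simp only: power_int_of_nat) simp
qed

lemma state_term_numer_tsum_snoc:
  assumes "tangle_wf S" "tsum_crossing T S x" "length s = length (xings S)"
  defines "R \<equiv> conn (state_edges (xings S) (tarcs S) s)"
    and "t \<equiv> state_weight s * dloop ^ tloops S s"
  shows "state_term (numer T) (s @ [True]) + state_term (numer T) (s @ [False]) =
    (if (tNW S, tNE S) \<in> R then (if x = (1, 3, 5, 7) then - (Avar ^ 3) else - inverse (Avar ^ 3)) * t else 0) +
    (if (tNW S, tSW S) \<in> R then (if x = (1, 3, 5, 7) then - inverse (Avar ^ 3) else - (Avar ^ 3)) * t else 0) +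
    (if (tNW S, tSE S) \<in> R then (Avar + inverse Avar) * t else 0)"
proof -
  have contribution: "state_term (numer T) (s @ [b]) = (if b then Avar else inverse Avar) *
      (if (if (x = (1, 3, 5, 7)) = b then (tNW S, tNE S) \<in> R else (tNW S, tSW S) \<in> R)
       then dloop else 1) * t" for b
  proof -
    have "card (dpts (dxings (numer T)) (darcs (numer T)) //
        conn (state_edges (dxings (numer T)) (darcs (numer T)) (s @ [b]))) = tloops S s +
      (if (if (x = (1, 3, 5, 7)) = b then (tNW S, tNE S) \<in> R else (tNW S, tSW S) \<in> R) then 2 else 1)"
      using card_components_numer_tsum_zero[OF assms(1-3), of b]
        card_components_numer_tsum_infinity[OF assms(1-3), of b]
      unfolding R_def by (cases "(x = (1, 3, 5, 7)) = b") simp_all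
    then show ?thesis
      by (simp only: state_term_def state_weight_snoc dloop_powi_components t_def mult_ac)
  qed
  have "pairs_off R (tNW S) (tNE S) (tSW S) (tSE S)"
    unfolding R_def by (rule pairs_off_tangle_state[OF assms(1,3)])
  then have "(tNW S, tNE S) \<in> R \<and> (tNW S, tSW S) \<notin> R \<and> (tNW S, tSE S) \<notin> R \<or>
      (tNW S, tNE S) \<notin> R \<and> (tNW S, tSW S) \<in> R \<and> (tNW S, tSE S) \<notin> R \<or>
      (tNW S, tNE S) \<notin> R \<and> (tNW S, tSW S) \<notin> R \<and> (tNW S, tSE S) \<in> R"
    unfolding pairs_off_def by blast
  then show ?thesis
    unfolding contribution
    by (elim disjE; cases "x = (1, 3, 5, 7)")
      (simp_all add: dloop_def field_simps power2_eq_square power3_eq_cube)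
qed

lemma bracket_numer_tsum:
  assumes "tangle_wf S" "tsum_crossing T S x"
  shows "bracket (numer T) =
    (if x = (1, 3, 5, 7) then - (Avar ^ 3) * alpha S - inverse (Avar ^ 3) * beta S
     else - inverse (Avar ^ 3) * alpha S - Avar ^ 3 * beta S) + (Avar + inverse Avar) * gamma S"
proof -
  define n where "n = length (xings S)"
  define R where "R s = conn (state_edges (xings S) (tarcs S) s)" for s
  define t where "t s = state_weight s * dloop ^ tloops S s" for s
  define c_zero where "c_zero = (if x = (1, 3, 5, 7) then - (Avar ^ 3) else - inverse (Avar ^ 3))"
  define c_infinity where "c_infinity = (if x = (1, 3, 5, 7) then - inverse (Avar ^ 3) else - (Avar ^ 3))"
  have "length (dxings (numer T)) = Suc n"
    using assms(2) by (simp add: tsum_crossing_def numer_def n_def)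
  then have "bracket (numer T) = (\<Sum>s\<in>states n. state_term (numer T) (s @ [True]) + state_term (numer T) (s @ [False]))"
    by (simp add: bracket_eq_sum_state_term sum_states_Suc)
  also have "\<dots> = (\<Sum>s\<in>states n. (if (tNW S, tNE S) \<in> R s then c_zero * t s else 0) +
      (if (tNW S, tSW S) \<in> R s then c_infinity * t s else 0) +
      (if (tNW S, tSE S) \<in> R s then (Avar + inverse Avar) * t s else 0))"
    using state_term_numer_tsum_snoc[OF assms] unfolding R_def t_def c_zero_def c_infinity_def
    by (intro sum.cong) (simp_all add: states_def n_def)
  also have "\<dots> = c_zero * (\<Sum>s | s \<in> states n \<and> (tNW S, tNE S) \<in> R s. t s) +
      c_infinity * (\<Sum>s | s \<in> states n \<and> (tNW S, tSW S) \<in> R s. t s) +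
      (Avar + inverse Avar) * (\<Sum>s | s \<in> states n \<and> (tNW S, tSE S) \<in> R s. t s)"
    by (simp add: sum.distrib sum.inter_filter[symmetric] sum_distrib_left finite_list_length states_def
        if_distrib[of "\<lambda>c. c * _"])
  also have "\<dots> = c_zero * alpha S + c_infinity * beta S + (Avar + inverse Avar) * gamma S"
    unfolding alpha_def beta_def gamma_def tcoef_def t_def R_def n_def by simp
  finally show ?thesis unfolding c_zero_def c_infinity_def by (simp add: algebra_simps)
qed

section \<open>Writhe and the Jones polynomial\<close>

lemma writhe_numer_tsum_mone:
  assumes "is_orientation (numer (tsum S one_tangle)) Or"
    and "xsign Or (map_xing (\<lambda>p. 2 * p + 1) one_xing) = -1"
  shows "writhe (numer (tsum S mone_tangle)) Or = writhe (numer (tsum S one_tangle)) Or + 2"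
proof -
  let ?H = "heads Or"
  have sign: "xsign Or (1, 3, 5, 7) = -1" using assms(2) by (simp add: one_xing_def)
  then have "(1 \<in> ?H) = (3 \<in> ?H)" by (auto split: if_splits)
  moreover have "(1, 3, 5, 7) \<in> set (dxings (numer (tsum S one_tangle)))"
    using tsum_crossing_one_tangle by (simp add: tsum_crossing_def numer_def)
  then have "(3 \<in> ?H) \<noteq> (7 \<in> ?H)" "(1 \<in> ?H) \<noteq> (5 \<in> ?H)"
    using assms(1) unfolding is_orientation_def by fastforce+
  ultimately have "xsign Or (3, 5, 7, 1) = 1" by auto
  with sign show ?thesis
    using tsum_crossing_one_tangle[of S] tsum_crossing_mone_tangle[of S]
    by (simp add: tsum_crossing_def writhe_def numer_def)
qed

lemma bracket_eq_if_jones_eq: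
  assumes "jones D Or = jones D' Or" "writhe D' Or = writhe D Or + 2"
  shows "bracket D' = Avar ^ 6 * bracket D"
proof -
  define c where "c = - (Avar ^ 3)"
  define w where "w = writhe D Or"
  have "c \<noteq> 0" by (simp add: c_def)
  have "c powi (- w) * bracket D = c powi (- w - 2) * bracket D'"
    using assms unfolding jones_def c_def w_def by simp
  then have "c powi (w + 2) * (c powi (- w) * bracket D)
      = c powi (w + 2) * (c powi (- w - 2) * bracket D')"
    by (rule arg_cong)
  then have "c powi ((w + 2) + (- w)) * bracket D = c powi ((w + 2) + (- w - 2)) * bracket D'"
    by (simp only: power_int_add[OF disjI1[OF \<open>c \<noteq> 0\<close>]] mult.assoc)
  then have "c powi 2 * bracket D = bracket D'" by simp
  then show ?thesis by (simp add: c_def power_int_numeral flip: power_mult)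
qed

lemma Avar_power_neq_1: "n > 0 \<Longrightarrow> Avar ^ n \<noteq> 1"
proof
  assume "n > 0" "Avar ^ n = 1"
  then have "fls_subdegree (fls_X ^ n :: rat fls) = fls_subdegree (1 :: rat fls)"
    by (simp add: Avar_def)
  then show False using \<open>n > 0\<close> by (simp add: fls_subdegree_fls_X_pow)
qed

theorem mainTheorem5:
  fixes S :: tangle and Or :: "arc list"
  assumes "tangle_wf S"
    and "gamma S = 0"
    and "is_orientation (numer (tsum S one_tangle)) Or"
    and "xsign Or (map_xing (\<lambda>p. 2 * p + 1) one_xing) = -1"
    and "jones (numer (tsum S one_tangle)) Or = jones (numer (tsum S mone_tangle)) Or"
  shows "alpha S = 0 \<and> beta S = - (Avar ^ 3) * bracket (numer (tsum S one_tangle))"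
proof -
  define B where "B = bracket (numer (tsum S one_tangle))"
  define B' where "B' = bracket (numer (tsum S mone_tangle))"
  have L: "B = - (Avar ^ 3) * alpha S - inverse (Avar ^ 3) * beta S"
    using bracket_numer_tsum[OF assms(1) tsum_crossing_one_tangle] assms(2) by (simp add: B_def)
  have L': "B' = - inverse (Avar ^ 3) * alpha S - Avar ^ 3 * beta S"
    using bracket_numer_tsum[OF assms(1) tsum_crossing_mone_tangle] assms(2) by (simp add: B'_def)
  have "B' = Avar ^ 6 * B"
    unfolding B_def B'_def by (rule bracket_eq_if_jones_eq[OF assms(5) writhe_numer_tsum_mone[OF assms(3,4)]])
  then have "Avar ^ 3 * B' = - (Avar ^ 12 * alpha S) - Avar ^ 6 * beta S"
    unfolding L by (simp add: field_simps flip: power_add)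
  moreover have "Avar ^ 3 * B' = - alpha S - Avar ^ 6 * beta S"
    unfolding L' by (simp add: field_simps flip: power_add)
  ultimately have "(Avar ^ 12 - 1) * alpha S = 0" by (simp add: algebra_simps)
  then have "alpha S = 0" using Avar_power_neq_1[of 12] by simp
  moreover from this have "beta S = - (Avar ^ 3) * B"
    unfolding L by (simp add: field_simps)
  ultimately show ?thesis by (simp add: B_def)
qed

end
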